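(* Let $M$ be a finite abelian group and $i\colon\hat{M}\to\hat{M}$ a bijection with $i(x)=x\,i(x^{-1})$ for all $x\in\hat{M}$. Define $x\oplus y=x\,i(x/y)^{-1}$ for $x,y\in\hat{M}$. Then: (a) $\oplus$ is commutative; (b) $z(x\oplus y)=(zx)\oplus(zy)$ for all $x,y,z\in\hat{M}$; (c) $\oplus$ is cancellative, i.e., $x\oplus y=x\oplus z$ implies $y=z$.
   Context: $\hat{M}$ is the Pontryagin dual of $M$, written multiplicatively. *)

theory Defs
  imports "HOL-Algebra.Algebra" Complex_Main
begin

definition characters :: "('a, 'b) monoid_scheme \<Rightarrow> ('a \<Rightarrow> complex) set" where
  "characters M = {\<chi>. \<chi> \<in> extensional (carrier M)
      \<and> (\<forall>x\<in>carrier M. cmod (\<chi> x) = 1)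
      \<and> (\<forall>x\<in>carrier M. \<forall>y\<in>carrier M. \<chi> (x \<otimes>\<^bsub>M\<^esub> y) = \<chi> x * \<chi> y)}"

definition dual_group :: "('a, 'b) monoid_scheme \<Rightarrow> ('a \<Rightarrow> complex) monoid" where
  "dual_group M = \<lparr> carrier = characters M,
      monoid.mult = (\<lambda>\<chi> \<psi>. \<lambda>x\<in>carrier M. \<chi> x * \<psi> x),
      one = (\<lambda>x\<in>carrier M. 1) \<rparr>"

end

theory Submission
  imports Defs
begin

text \<open>Nothing about characters is needed: in any abelian group \<open>G\<close>, translating \<open>x\<close> and
\<open>y\<close> by \<open>z\<close> leaves \<open>x/y\<close> unchanged, so \<open>x \<oplus> y\<close> is multiplied by \<open>z\<close>; with \<open>u = x/y\<close>, the identity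
\<open>i(u) = u i(u\<inverse>)\<close> rewrites \<open>x i(u)\<inverse>\<close> as \<open>y i(u\<inverse>)\<inverse>\<close>, which is commutativity; and
cancellation is injectivity of \<open>i\<close>. The dual of \<open>M\<close> is such a group whenever \<open>M\<close> is a monoid.\<close>

lemma comm_group_dual_group:
  assumes "monoid M"
  shows "comm_group (dual_group M)"
proof -
  interpret M: monoid M by fact
  show ?thesis
  proof (rule comm_groupI)
    fix \<chi> \<psi> assume "\<chi> \<in> carrier (dual_group M)" "\<psi> \<in> carrier (dual_group M)"
    then show "\<chi> \<otimes>\<^bsub>dual_group M\<^esub> \<psi> \<in> carrier (dual_group M)"
      by (auto simp: dual_group_def characters_def norm_mult)
  next
    show "\<one>\<^bsub>dual_group M\<^esub> \<in> carrier (dual_group M)"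
      by (auto simp: dual_group_def characters_def)
  next
    fix \<chi> \<psi> \<phi>
    show "\<chi> \<otimes>\<^bsub>dual_group M\<^esub> \<psi> \<otimes>\<^bsub>dual_group M\<^esub> \<phi> =
          \<chi> \<otimes>\<^bsub>dual_group M\<^esub> (\<psi> \<otimes>\<^bsub>dual_group M\<^esub> \<phi>)"
      by (auto simp: dual_group_def fun_eq_iff)
  next
    fix \<chi> \<psi>
    show "\<chi> \<otimes>\<^bsub>dual_group M\<^esub> \<psi> = \<psi> \<otimes>\<^bsub>dual_group M\<^esub> \<chi>"
      by (auto simp: dual_group_def fun_eq_iff)
  next
    fix \<chi> assume "\<chi> \<in> carrier (dual_group M)"
    then show "\<one>\<^bsub>dual_group M\<^esub> \<otimes>\<^bsub>dual_group M\<^esub> \<chi> = \<chi>"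
      by (auto simp: dual_group_def characters_def fun_eq_iff extensional_def)
  next
    fix \<chi> assume \<chi>: "\<chi> \<in> carrier (dual_group M)"
    define \<chi>' where "\<chi>' = (\<lambda>a\<in>carrier M. inverse (\<chi> a))"
    have "\<chi>' \<in> carrier (dual_group M)"
      using \<chi> by (auto simp: \<chi>'_def dual_group_def characters_def norm_inverse)
    moreover have "\<chi>' \<otimes>\<^bsub>dual_group M\<^esub> \<chi> = \<one>\<^bsub>dual_group M\<^esub>"
    proof -
      have "\<chi> a \<noteq> 0" if "a \<in> carrier M" for a
        using \<chi> that by (auto simp: dual_group_def characters_def)
      then show ?thesis
        by (auto simp: \<chi>'_def dual_group_def fun_eq_iff)
    qed
    ultimately show "\<exists>\<chi>'\<in>carrier (dual_group M). \<chi>' \<otimes>\<^bsub>dual_group M\<^esub> \<chi> = \<one>\<^bsub>dual_group M\<^esub>"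
      by blast
  qed
qed

context comm_group
begin

definition twisted_sum :: "('a \<Rightarrow> 'a) \<Rightarrow> 'a \<Rightarrow> 'a \<Rightarrow> 'a" where
  "twisted_sum i x y = x \<otimes> inv (i (x \<otimes> inv y))"

lemma mult_div_mult_left:
  assumes "x \<in> carrier G" "y \<in> carrier G" "z \<in> carrier G"
  shows "(z \<otimes> x) \<otimes> inv (z \<otimes> y) = x \<otimes> inv y"
proof -
  have "(z \<otimes> x) \<otimes> inv (z \<otimes> y) = (z \<otimes> inv z) \<otimes> (x \<otimes> inv y)"
    using assms by (simp add: inv_mult m_ac)
  then show ?thesis
    using assms by simp
qed

lemma twisted_sum_commute:
  assumes i_closed: "i \<in> carrier G \<rightarrow> carrier G"
    and i_inv: "\<forall>u\<in>carrier G. i u = u \<otimes> i (inv u)"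
    and x: "x \<in> carrier G" and y: "y \<in> carrier G"
  shows "twisted_sum i x y = twisted_sum i y x"
proof -
  define u where "u = x \<otimes> inv y"
  have u: "u \<in> carrier G"
    using x y by (simp add: u_def)
  have inv_u: "inv u = y \<otimes> inv x"
    using x y by (simp add: u_def inv_mult m_comm)
  have "twisted_sum i x y = x \<otimes> inv (i u)"
    by (simp add: twisted_sum_def u_def)
  also have "\<dots> = x \<otimes> inv (u \<otimes> i (inv u))"
    using bspec[OF i_inv u] by simp
  also have "\<dots> = (x \<otimes> inv u) \<otimes> inv (i (inv u))"
    using x u i_closed by (simp add: inv_mult m_assoc Pi_iff)
  also have "x \<otimes> inv u = y"
    using x y by (simp add: u_def inv_mult, simp add: m_assoc[symmetric])
  finally show ?thesis
    by (simp add: twisted_sum_def inv_u)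
qed

lemma mult_twisted_sum:
  assumes i_closed: "i \<in> carrier G \<rightarrow> carrier G"
    and "x \<in> carrier G" "y \<in> carrier G" "z \<in> carrier G"
  shows "z \<otimes> twisted_sum i x y = twisted_sum i (z \<otimes> x) (z \<otimes> y)"
proof -
  have "twisted_sum i (z \<otimes> x) (z \<otimes> y) = (z \<otimes> x) \<otimes> inv (i (x \<otimes> inv y))"
    using assms by (simp add: twisted_sum_def mult_div_mult_left)
  then show ?thesis
    using assms by (simp add: twisted_sum_def m_assoc Pi_iff)
qed

lemma twisted_sum_cancel:
  assumes i_closed: "i \<in> carrier G \<rightarrow> carrier G"
    and inj: "inj_on i (carrier G)"
    and x: "x \<in> carrier G" and y: "y \<in> carrier G" and z: "z \<in> carrier G"
    and eq: "twisted_sum i x y = twisted_sum i x z"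
  shows "y = z"
proof -
  have "inv (i (x \<otimes> inv y)) = inv (i (x \<otimes> inv z))"
    using eq x y z i_closed by (simp add: twisted_sum_def Pi_iff)
  then have "i (x \<otimes> inv y) = i (x \<otimes> inv z)"
    using x y z i_closed by (metis inv_inv m_closed inv_closed funcset_mem)
  then have "x \<otimes> inv y = x \<otimes> inv z"
    using inj x y z by (simp add: inj_on_def)
  then show ?thesis
    using x y z by (metis inv_inv inv_closed l_cancel)
qed

end

theorem mainTheorem14:
  fixes M :: "('a, 'b) monoid_scheme"
    and i :: "('a \<Rightarrow> complex) \<Rightarrow> ('a \<Rightarrow> complex)"
    and oplus :: "('a \<Rightarrow> complex) \<Rightarrow> ('a \<Rightarrow> complex) \<Rightarrow> ('a \<Rightarrow> complex)"
  assumes "comm_group M"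
    and "finite (carrier M)"
    and "bij_betw i (carrier (dual_group M)) (carrier (dual_group M))"
    and "\<forall>x\<in>carrier (dual_group M).
           i x = x \<otimes>\<^bsub>dual_group M\<^esub> i (inv\<^bsub>dual_group M\<^esub> x)"
    and "\<forall>x y. oplus x y = x \<otimes>\<^bsub>dual_group M\<^esub>
           inv\<^bsub>dual_group M\<^esub> (i (x \<otimes>\<^bsub>dual_group M\<^esub> inv\<^bsub>dual_group M\<^esub> y))"
  shows "(\<forall>x\<in>carrier (dual_group M). \<forall>y\<in>carrier (dual_group M). oplus x y = oplus y x)
    \<and> (\<forall>x\<in>carrier (dual_group M). \<forall>y\<in>carrier (dual_group M). \<forall>z\<in>carrier (dual_group M).
         z \<otimes>\<^bsub>dual_group M\<^esub> oplus x y
           = oplus (z \<otimes>\<^bsub>dual_group M\<^esub> x) (z \<otimes>\<^bsub>dual_group M\<^esub> y))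
    \<and> (\<forall>x\<in>carrier (dual_group M). \<forall>y\<in>carrier (dual_group M). \<forall>z\<in>carrier (dual_group M).
         oplus x y = oplus x z \<longrightarrow> y = z)"
proof -
  interpret M: comm_group M by fact
  interpret D: comm_group "dual_group M"
    by (rule comm_group_dual_group) (rule M.is_monoid)
  have i_closed: "i \<in> carrier (dual_group M) \<rightarrow> carrier (dual_group M)"
    using assms(3) by (rule bij_betw_imp_funcset)
  have inj: "inj_on i (carrier (dual_group M))"
    using assms(3) by (rule bij_betw_imp_inj_on)
  have oplus: "oplus = D.twisted_sum i"
    using assms(5) by (simp add: fun_eq_iff D.twisted_sum_def)
  show ?thesis
    unfolding oplus
  proof (intro conjI ballI impI)
    fix x y assume "x \<in> carrier (dual_group M)" "y \<in> carrier (dual_group M)"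
    then show "D.twisted_sum i x y = D.twisted_sum i y x"
      by (rule D.twisted_sum_commute[OF i_closed assms(4)])
  next
    fix x y z assume "x \<in> carrier (dual_group M)" "y \<in> carrier (dual_group M)"
      "z \<in> carrier (dual_group M)"
    then show "z \<otimes>\<^bsub>dual_group M\<^esub> D.twisted_sum i x y
        = D.twisted_sum i (z \<otimes>\<^bsub>dual_group M\<^esub> x) (z \<otimes>\<^bsub>dual_group M\<^esub> y)"
      by (rule D.mult_twisted_sum[OF i_closed])
  next
    fix x y z assume "x \<in> carrier (dual_group M)" "y \<in> carrier (dual_group M)"
      "z \<in> carrier (dual_group M)" "D.twisted_sum i x y = D.twisted_sum i x z"
    then show "y = z"
      by (rule D.twisted_sum_cancel[OF i_closed inj])
  qed
qed

end
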